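(* Let $\kappa$ be an infinite cardinal. The lattices $B=\{(A,\,A\cap C,\,C) : A,C\in\mathcal{F}(\kappa),\ A\sim C\}$ and $E=\{(A,B,A\cap B): A,B\in\mathcal{F}(\kappa)\}$, both ordered componentwise, are not isomorphic.
   Context: $\mathcal{F}(\kappa)$ is the Boolean lattice of subsets $X\subseteq\kappa$ that are finite or cofinite. For $A,C\in\mathcal{F}(\kappa)$, $A\sim C$ means that either both $A,C$ are finite or both $\kappa\setminus A,\kappa\setminus C$ are finite. Both $B$ and $E$ are sublattices of the lattice $S$ of balanced triples $(A,B,C)\in\mathcal{F}(\kappa)^3$ (i.e. $A\cap B=A\cap C=B\cap C$) with $C\setminus((A\cap B)\cup(A\cap C)\cup(B\cap C))$ finite; $E$ is the range of the map $f(A,B,C)=(\kappa\setminus A,\kappa\setminus(B\cup C),\kappa\setminus(A\cup B\cup C))$ on $S$. *)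

theory Defs
  imports Main
begin

text \<open>The Boolean lattice F(kappa) of finite or cofinite subsets of kappa; kappa is
  represented by the universe of a type 'k (infinite cardinal: infinite UNIV).\<close>
definition FinCofin :: "'k set set" where
  "FinCofin = {X. finite X \<or> finite (- X)}"

definition simeq :: "'k set \<Rightarrow> 'k set \<Rightarrow> bool" where
  "simeq A C \<longleftrightarrow> (finite A \<and> finite C) \<or> (finite (- A) \<and> finite (- C))"

definition latB :: "('k set \<times> 'k set \<times> 'k set) set" where
  "latB = {(A, A \<inter> C, C) | A C. A \<in> FinCofin \<and> C \<in> FinCofin \<and> simeq A C}"

definition latE :: "('k set \<times> 'k set \<times> 'k set) set" where
  "latE = {(A, B, A \<inter> B) | A B. A \<in> FinCofin \<and> B \<in> FinCofin}"

definition tle :: "('k set \<times> 'k set \<times> 'k set) \<Rightarrow> ('k set \<times> 'k set \<times> 'k set) \<Rightarrow> bool" where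
  "tle x y \<longleftrightarrow> fst x \<subseteq> fst y \<and> fst (snd x) \<subseteq> fst (snd y) \<and> snd (snd x) \<subseteq> snd (snd y)"

text \<open>Order isomorphism between two componentwise-ordered sets of triples
  (for lattices equivalent to lattice isomorphism).\<close>
definition triple_order_iso :: "('k set \<times> 'k set \<times> 'k set) set \<Rightarrow> ('k set \<times> 'k set \<times> 'k set) set \<Rightarrow> bool" where
  "triple_order_iso P Q \<longleftrightarrow> (\<exists>f. bij_betw f P Q \<and> (\<forall>x\<in>P. \<forall>y\<in>P. tle x y \<longleftrightarrow> tle (f x) (f y)))"

end

theory Submission
  imports Defs
begin

text \<open>
  Being an atom is an order-theoretic notion, so an order isomorphism preserves the following
  property: every element lies above only finitely many atoms, or fails to lie above only
  finitely many.  In \<open>latB\<close> the atoms are the triples \<open>({k}, {}, {})\<close> and \<open>({}, {}, {k})\<close>,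
  and the constraint \<open>A \<sim> C\<close> makes the atoms below \<open>(A, A \<inter> C, C)\<close> either finitely or
  cofinitely many.  In \<open>latE\<close> the element \<open>(\<kappa>, {}, {})\<close> lies above the infinitely many
  atoms \<open>({k}, {}, {})\<close> and not above the infinitely many atoms \<open>({}, {k}, {})\<close>.
\<close>

definition is_bottom :: "('a \<Rightarrow> 'a \<Rightarrow> bool) \<Rightarrow> 'a set \<Rightarrow> 'a \<Rightarrow> bool" where
  "is_bottom le P z \<longleftrightarrow> z \<in> P \<and> (\<forall>w\<in>P. le z w)"

definition atom :: "('a \<Rightarrow> 'a \<Rightarrow> bool) \<Rightarrow> 'a set \<Rightarrow> 'a \<Rightarrow> bool" where
  "atom le P a \<longleftrightarrow> a \<in> P \<and> \<not> is_bottom le P a \<and> (\<forall>z\<in>P. le z a \<longrightarrow> z = a \<or> is_bottom le P z)"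

definition atoms_finite_or_cofinite_below :: "('a \<Rightarrow> 'a \<Rightarrow> bool) \<Rightarrow> 'a set \<Rightarrow> bool" where
  "atoms_finite_or_cofinite_below le P \<longleftrightarrow>
     (\<forall>x\<in>P. finite {a. atom le P a \<and> le a x} \<or> finite {a. atom le P a \<and> \<not> le a x})"

lemma atom_of_atom_image:
  assumes bij: "bij_betw f P Q" and ord: "\<forall>x\<in>P. \<forall>y\<in>P. le x y \<longleftrightarrow> le' (f x) (f y)"
    and a: "a \<in> P" and atom: "atom le' Q (f a)"
  shows "atom le P a"
proof -
  have img: "f ` P = Q" and inj: "inj_on f P"
    using bij by (auto simp: bij_betw_def)
  have bottom_iff: "is_bottom le P z \<longleftrightarrow> is_bottom le' Q (f z)" if "z \<in> P" for z
    using that img ord unfolding is_bottom_def by blast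
  have "z = a \<or> is_bottom le P z" if z: "z \<in> P" "le z a" for z
  proof -
    have "f z = f a \<or> is_bottom le' Q (f z)"
      using atom z a ord img unfolding atom_def by blast
    then show ?thesis
      using inj z a bottom_iff by (auto dest: inj_onD)
  qed
  with a atom bottom_iff show ?thesis
    unfolding atom_def by blast
qed

lemma atoms_finite_or_cofinite_below_transfer:
  assumes bij: "bij_betw f P Q" and ord: "\<forall>x\<in>P. \<forall>y\<in>P. le x y \<longleftrightarrow> le' (f x) (f y)"
    and P: "atoms_finite_or_cofinite_below le P"
  shows "atoms_finite_or_cofinite_below le' Q"
  unfolding atoms_finite_or_cofinite_below_def
proof
  fix y assume "y \<in> Q"
  then obtain x where x: "x \<in> P" "y = f x"
    using bij by (auto simp: bij_betw_def)
  have image: "{b. atom le' Q b \<and> R b y} \<subseteq> f ` {a. atom le P a \<and> R' a x}"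
    if R: "\<And>a. a \<in> P \<Longrightarrow> R (f a) y \<longleftrightarrow> R' a x" for R R'
  proof
    fix b assume b: "b \<in> {b. atom le' Q b \<and> R b y}"
    then obtain a where "a \<in> P" "b = f a"
      using bij unfolding atom_def bij_betw_def by blast
    with b R show "b \<in> f ` {a. atom le P a \<and> R' a x}"
      using atom_of_atom_image[OF bij ord] by blast
  qed
  have "{b. atom le' Q b \<and> le' b y} \<subseteq> f ` {a. atom le P a \<and> le a x}"
    by (rule image) (use ord x in blast)
  moreover have "{b. atom le' Q b \<and> \<not> le' b y} \<subseteq> f ` {a. atom le P a \<and> \<not> le a x}"
    by (rule image) (use ord x in blast)
  moreover have "finite {a. atom le P a \<and> le a x} \<or> finite {a. atom le P a \<and> \<not> le a x}"
    using P x unfolding atoms_finite_or_cofinite_below_def by blast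
  ultimately show "finite {b. atom le' Q b \<and> le' b y} \<or> finite {b. atom le' Q b \<and> \<not> le' b y}"
    using finite_surj by blast
qed

lemma atom_latB_cases:
  assumes "atom tle (latB :: ('k set \<times> 'k set \<times> 'k set) set) a"
  obtains k where "a = ({k}, {}, {})" | k where "a = ({}, {}, {k})"
proof -
  obtain A C where a: "a = (A, A \<inter> C, C)"
    using assms unfolding atom_def latB_def by blast
  have bottom: "is_bottom tle latB (({}, {}, {}) :: 'k set \<times> 'k set \<times> 'k set)"
    unfolding is_bottom_def latB_def FinCofin_def simeq_def tle_def by auto
  have atom_minimal: "a = z" if "z \<in> latB" "tle z a" "\<not> is_bottom tle latB z" for z
    using assms that unfolding atom_def by blast
  have "A \<noteq> {} \<or> C \<noteq> {}"
    using assms a bottom unfolding atom_def is_bottom_def tle_def by auto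
  then show thesis
  proof
    assume "A \<noteq> {}"
    then obtain k where "k \<in> A" by blast
    then have "a = ({k}, {}, {})"
      using bottom a by (intro atom_minimal)
        (auto simp: latB_def FinCofin_def simeq_def tle_def is_bottom_def)
    then show thesis by (rule that)
  next
    assume "C \<noteq> {}"
    then obtain k where "k \<in> C" by blast
    then have "a = ({}, {}, {k})"
      using bottom a by (intro atom_minimal)
        (auto simp: latB_def FinCofin_def simeq_def tle_def is_bottom_def)
    then show thesis by (rule that)
  qed
qed

lemma atoms_finite_or_cofinite_below_latB:
  "atoms_finite_or_cofinite_below tle (latB :: ('k set \<times> 'k set \<times> 'k set) set)"
  unfolding atoms_finite_or_cofinite_below_def
proof
  fix x :: "'k set \<times> 'k set \<times> 'k set" assume "x \<in> latB"
  then obtain A C where x: "x = (A, A \<inter> C, C)" and "simeq A C"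
    unfolding latB_def by blast
  define singles :: "'k set \<Rightarrow> 'k set \<Rightarrow> ('k set \<times> 'k set \<times> 'k set) set" where
    "singles X Y = (\<lambda>k. ({k}, {}, {})) ` X \<union> (\<lambda>k. ({}, {}, {k})) ` Y" for X Y
  have below: "{a. atom tle latB a \<and> tle a x} \<subseteq> singles A C"
    and not_below: "{a. atom tle latB a \<and> \<not> tle a x} \<subseteq> singles (- A) (- C)"
    by (auto simp: singles_def x tle_def elim!: atom_latB_cases)
  have "finite (singles A C) \<or> finite (singles (- A) (- C))"
    using \<open>simeq A C\<close> unfolding simeq_def singles_def by auto
  then show "finite {a. atom tle latB a \<and> tle a x} \<or> finite {a. atom tle latB a \<and> \<not> tle a x}"
    using below not_below finite_subset by blast
qed

lemma atom_latE_singleton: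
  "atom tle (latE :: ('k set \<times> 'k set \<times> 'k set) set) ({k}, {}, {})"
  "atom tle (latE :: ('k set \<times> 'k set \<times> 'k set) set) ({}, {k}, {})"
proof -
  have empty: "({}, {}, {}) \<in> (latE :: ('k set \<times> 'k set \<times> 'k set) set)"
    unfolding latE_def FinCofin_def by force
  have members: "({k}, {}, {}) \<in> (latE :: ('k set \<times> 'k set \<times> 'k set) set)"
    "({}, {k}, {}) \<in> (latE :: ('k set \<times> 'k set \<times> 'k set) set)"
    unfolding latE_def FinCofin_def by force+
  show "atom tle (latE :: ('k set \<times> 'k set \<times> 'k set) set) ({k}, {}, {})"
    "atom tle (latE :: ('k set \<times> 'k set \<times> 'k set) set) ({}, {k}, {})"
    using empty members unfolding atom_def is_bottom_def
    by (auto simp: latE_def tle_def subset_singleton_iff)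
qed

lemma not_atoms_finite_or_cofinite_below_latE:
  assumes "infinite (UNIV :: 'k set)"
  shows "\<not> atoms_finite_or_cofinite_below tle (latE :: ('k set \<times> 'k set \<times> 'k set) set)"
proof
  let ?x = "(UNIV, {}, {}) :: 'k set \<times> 'k set \<times> 'k set"
  assume "atoms_finite_or_cofinite_below tle (latE :: ('k set \<times> 'k set \<times> 'k set) set)"
  moreover have "?x \<in> latE"
    unfolding latE_def FinCofin_def by force
  ultimately have "finite {a. atom tle latE a \<and> tle a ?x} \<or> finite {a. atom tle latE a \<and> \<not> tle a ?x}"
    unfolding atoms_finite_or_cofinite_below_def by blast
  moreover have "(\<lambda>k. ({k}, {}, {})) ` UNIV \<subseteq> {a. atom tle latE a \<and> tle a ?x}"
    and "(\<lambda>k. ({}, {k}, {})) ` UNIV \<subseteq> {a. atom tle latE a \<and> \<not> tle a ?x}"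
    using atom_latE_singleton by (auto simp: tle_def)
  moreover have "infinite ((\<lambda>k::'k. ({k}, {}, {})) ` UNIV)"
    and "infinite ((\<lambda>k::'k. ({}, {k}, {})) ` UNIV)"
    using assms by (simp_all add: finite_image_iff inj_on_def)
  ultimately show False
    using finite_subset by blast
qed

theorem proposition5p9:
  assumes "infinite (UNIV :: 'k set)"
  shows "\<not> triple_order_iso (latB :: ('k set \<times> 'k set \<times> 'k set) set) latE"
  unfolding triple_order_iso_def
  using atoms_finite_or_cofinite_below_transfer atoms_finite_or_cofinite_below_latB
    not_atoms_finite_or_cofinite_below_latE[OF assms] by blast

end
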